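(* Let $\mathcal{V}$ be a quaternionic two-sided Banach algebra with unit and let $v\in\mathcal{V}$. Then $$\partial\sigma_{S}(v)\subseteq B_{S,\partial}(v)\subseteq \sigma_{S}(v).$$
   Context: $\mathbb{H}$ denotes the quaternions, $Re(q)$ the real part and $|q|$ the norm of $q$. A quaternionic two-sided Banach algebra with unit is a two-sided $\mathbb{H}$-vector space $\mathcal{V}$ with an associative product satisfying $x(y+z)=xy+xz$, $(x+y)z=xz+yz$, $q(xy)=(qx)y$, $(xy)q=x(yq)$, complete for a norm with $\|qx\|=|q|\|x\|=\|xq\|$, $\|xy\|\le\|x\|\|y\|$, with unit $1_{\mathcal{V}}\ne0$, $\|1_{\mathcal{V}}\|=1$. $\mathcal{V}^{-1}$ is the set of invertible elements. $R_q(v)=v^2-2Re(q)v+|q|^21_{\mathcal{V}}$. S-spectrum: $\sigma_S(v)=\{q\in\mathbb{H}:R_q(v)\notin\mathcal{V}^{-1}\}$, with boundary $\partial\sigma_S(v)$ in $\mathbb{H}$. Boundary S-spectrum: $B_{S,\partial}(v)=\{q\in\mathbb{H}: R_q(v)\in\partial(\mathcal{V}\setminus\mathcal{V}^{-1})\}$, where $\partial(\mathcal{V}\setminus\mathcal{V}^{-1})$ is the topological boundary in $\mathcal{V}$. *)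

theory Defs
  imports "HOL-Analysis.Analysis"
begin

text \<open>Quaternions are modelled as real^4 (components 1,2,3,4 = real part, i, j, k).
  The Euclidean norm on real^4 is the quaternionic norm, and the topology is the usual one.\<close>

type_synonym quat = "real^4"

definition quat_mult :: "quat \<Rightarrow> quat \<Rightarrow> quat" where
  "quat_mult p q = vector
     [p$1*q$1 - p$2*q$2 - p$3*q$3 - p$4*q$4,
      p$1*q$2 + p$2*q$1 + p$3*q$4 - p$4*q$3,
      p$1*q$3 - p$2*q$4 + p$3*q$1 + p$4*q$2,
      p$1*q$4 + p$2*q$3 - p$3*q$2 + p$4*q$1]"

definition quat_of_real :: "real \<Rightarrow> quat" where
  "quat_of_real r = vector [r, 0, 0, 0]"

definition quat_Re :: "quat \<Rightarrow> real" where
  "quat_Re q = q$1"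

text \<open>A quaternionic two-sided Banach algebra with unit: the underlying real Banach algebra with
  unit (norm of unit 1, 1 \<noteq> 0, submultiplicative norm, complete) is given by the type class;
  lsm / rsm are the left / right quaternionic scalar multiplications.\<close>

definition qbanach_alg :: "(quat \<Rightarrow> 'v::{real_normed_algebra_1,banach} \<Rightarrow> 'v) \<Rightarrow> ('v \<Rightarrow> quat \<Rightarrow> 'v) \<Rightarrow> bool" where
  "qbanach_alg lsm rsm \<longleftrightarrow>
     (\<forall>p q x. lsm (p + q) x = lsm p x + lsm q x) \<and>
     (\<forall>q x y. lsm q (x + y) = lsm q x + lsm q y) \<and>
     (\<forall>p q x. lsm (quat_mult p q) x = lsm p (lsm q x)) \<and>
     (\<forall>p q x. rsm x (p + q) = rsm x p + rsm x q) \<and>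
     (\<forall>q x y. rsm (x + y) q = rsm x q + rsm y q) \<and>
     (\<forall>p q x. rsm x (quat_mult p q) = rsm (rsm x p) q) \<and>
     (\<forall>p q x. rsm (lsm p x) q = lsm p (rsm x q)) \<and>
     (\<forall>r x. lsm (quat_of_real r) x = r *\<^sub>R x \<and> rsm x (quat_of_real r) = r *\<^sub>R x) \<and>
     (\<forall>q x y. lsm q (x * y) = lsm q x * y) \<and>
     (\<forall>q x y. rsm (x * y) q = x * rsm y q) \<and>
     (\<forall>q x. norm (lsm q x) = norm q * norm x \<and> norm (rsm x q) = norm q * norm x)"

definition invertibles :: "'v::ring_1 set" where
  "invertibles = {x. \<exists>y. x * y = 1 \<and> y * x = 1}"

definition Rq :: "quat \<Rightarrow> 'v::real_normed_algebra_1 \<Rightarrow> 'v" where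
  "Rq q v = v * v - (2 * quat_Re q) *\<^sub>R v + ((norm q)^2) *\<^sub>R 1"

definition S_spectrum :: "'v::real_normed_algebra_1 \<Rightarrow> quat set" where
  "S_spectrum v = {q. Rq q v \<notin> invertibles}"

definition boundary_S_spectrum :: "'v::real_normed_algebra_1 \<Rightarrow> quat set" where
  "boundary_S_spectrum v = {q. Rq q v \<in> frontier (UNIV - invertibles)}"

end

theory Submission
  imports Defs
begin

text \<open>The S-spectrum is the preimage of the non-invertible elements under the continuous map
  \<open>q \<mapsto> R\<^sub>q(v)\<close>, and the frontier of a preimage under a continuous map lies in the preimage
  of the frontier. Since the invertible elements form an open set (Neumann series), the frontier
  of the non-invertible elements consists of non-invertible elements.\<close>

lemma closure_vimage_subset:
  assumes "continuous_on UNIV f"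
  shows "closure (f -` A) \<subseteq> f -` closure A"
proof -
  have "f ` closure (f -` A) \<subseteq> closure (f ` f -` A)"
    using continuous_image_closure_subset[OF assms] by blast
  also have "\<dots> \<subseteq> closure A"
    by (intro closure_mono) auto
  finally show ?thesis by blast
qed

lemma frontier_vimage_subset:
  assumes "continuous_on UNIV f"
  shows "frontier (f -` A) \<subseteq> f -` frontier A"
  using closure_vimage_subset[OF assms, of A] closure_vimage_subset[OF assms, of "- A"]
  unfolding frontier_closures by (auto simp: vimage_Compl)

lemma invertibles_mult:
  fixes a b :: "'a::ring_1"
  assumes "a \<in> invertibles" "b \<in> invertibles"
  shows "a * b \<in> invertibles"
proof -
  obtain a' where a: "a * a' = 1" "a' * a = 1" using assms(1) unfolding invertibles_def by blast
  obtain b' where b: "b * b' = 1" "b' * b = 1" using assms(2) unfolding invertibles_def by blast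
  have "(a * b) * (b' * a') = 1" by (metis a(1) b(1) mult.assoc mult.right_neutral)
  moreover have "(b' * a') * (a * b) = 1" by (metis a(2) b(2) mult.assoc mult.right_neutral)
  ultimately show ?thesis unfolding invertibles_def by blast
qed

lemma one_minus_in_invertibles:
  fixes h :: "'a::{real_normed_algebra_1,banach}"
  assumes "norm h < 1"
  shows "1 - h \<in> invertibles"
proof -
  define s where "s = (\<Sum>n. h ^ n)"
  have s: "(\<lambda>n. h ^ n) sums s"
    using complete_algebra_summable_geometric[OF assms] unfolding s_def by (rule summable_sums)
  have telescope: "(\<lambda>n. h ^ n - h ^ Suc n) sums 1"
    using telescope_sums'[OF summable_LIMSEQ_zero[OF sums_summable[OF s]]] by simp
  have "(\<lambda>n. h ^ n - h ^ Suc n) sums ((1 - h) * s)"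
    using sums_mult[OF s, of "1 - h"] by (simp add: algebra_simps)
  then have left: "(1 - h) * s = 1"
    using telescope sums_unique2 by blast
  have "(\<lambda>n. h ^ n - h ^ Suc n) sums (s * (1 - h))"
    using sums_mult2[OF s, of "1 - h"] by (simp add: algebra_simps power_commutes)
  then have right: "s * (1 - h) = 1"
    using telescope sums_unique2 by blast
  show ?thesis using left right unfolding invertibles_def by blast
qed

lemma open_invertibles: "open (invertibles :: 'a::{real_normed_algebra_1,banach} set)"
  unfolding open_dist
proof (intro ballI)
  fix a :: 'a
  assume a: "a \<in> invertibles"
  then obtain b where ab: "a * b = 1" "b * a = 1" unfolding invertibles_def by blast
  define e where "e = 1 / (norm b + 1)"
  have "e > 0" unfolding e_def by (simp add: add_nonneg_pos)
  moreover have "y \<in> invertibles" if "dist y a < e" for y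
  proof -
    have "norm (b * (a - y)) \<le> norm b * norm (a - y)"
      by (rule norm_mult_ineq)
    also have "\<dots> \<le> norm b * e"
      using that by (simp add: dist_norm norm_minus_commute mult_left_mono)
    also have "\<dots> < 1"
      unfolding e_def by (simp add: divide_less_eq add_nonneg_pos)
    finally have "a * (1 - b * (a - y)) \<in> invertibles"
      using invertibles_mult a one_minus_in_invertibles by blast
    moreover have "a * (1 - b * (a - y)) = y"
      by (simp add: algebra_simps mult.assoc[symmetric] ab)
    ultimately show ?thesis by simp
  qed
  ultimately show "\<exists>e>0. \<forall>y. dist y a < e \<longrightarrow> y \<in> invertibles"
    by blast
qed

lemma continuous_on_Rq: "continuous_on UNIV (\<lambda>q. Rq q v)"
  unfolding Rq_def quat_Re_def by (intro continuous_intros)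

lemma S_spectrum_eq_vimage: "S_spectrum v = (\<lambda>q. Rq q v) -` (- invertibles)"
  unfolding S_spectrum_def by auto

lemma boundary_S_spectrum_eq_vimage:
  "boundary_S_spectrum v = (\<lambda>q. Rq q v) -` frontier (- invertibles)"
  unfolding boundary_S_spectrum_def by (auto simp: Compl_eq_Diff_UNIV)

theorem mainTheorem7:
  fixes lsm :: "quat \<Rightarrow> 'v::{real_normed_algebra_1,banach} \<Rightarrow> 'v"
    and rsm :: "'v \<Rightarrow> quat \<Rightarrow> 'v"
    and v :: 'v
  assumes "qbanach_alg lsm rsm"
  shows "frontier (S_spectrum v) \<subseteq> boundary_S_spectrum v
       \<and> boundary_S_spectrum v \<subseteq> S_spectrum v"
proof
  show "frontier (S_spectrum v) \<subseteq> boundary_S_spectrum v"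
    unfolding S_spectrum_eq_vimage boundary_S_spectrum_eq_vimage
    using continuous_on_Rq by (rule frontier_vimage_subset)
  have "frontier (- invertibles) \<subseteq> - (invertibles :: 'v set)"
    by (intro frontier_subset_closed closed_Compl open_invertibles)
  then show "boundary_S_spectrum v \<subseteq> S_spectrum v"
    unfolding S_spectrum_eq_vimage boundary_S_spectrum_eq_vimage by blast
qed

end
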